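(* Let $1\le p\le\infty$, $E=\mathcal{L}^p(I)$ and $b\in E$. If $\alpha_n(t)\in\{\Lambda,-\Lambda\}$ for all $n$ and all $t\in I$, then $\|0*_Tb\|_p=\Lambda\|0*_Tb-b\|_p$. If the maps $\alpha_n$ are constant functions, then $\|0*_Tb\|_p\le\Lambda\|0*_Tb-b\|_p$ for every $b\in E$, and consequently $\|\mathcal{P}_0^1\|\le\Lambda\|\mathcal{P}_0^1-I\|$, where $\mathcal{P}_0^1(b):=0*_Tb$, $I$ is the identity on $E$ and $\|\cdot\|$ is the operator norm. For $0<p<1$ the same holds with $\|g\|_p$ interpreted as $\int_I|g|^p\,dx$ and $\Lambda$ replaced by $\Lambda^p$.
   Context: Let $N\ge 2$, $I=[x_0,x_N]$, $\Delta: x_0<\dots<x_N$ a partition, $L_n(x)=a_nx+b_n$ affine with $L_n(x_0)=x_{n-1}$, $L_n(x_N)=x_n$, $I_1=[x_0,x_1]$, $I_n=(x_{n-1},x_n]$ for $n\ge2$, and $\alpha=(\alpha_1,\dots,\alpha_N)\in(\mathcal{L}^\infty(I))^N$ with $\Lambda:=\operatorname{ess\,sup}\{|\alpha_n(x)|:x\in I,n=1,\dots,N\}<1$. For $f,b\in E$, $f*_Tb$ is the unique fixed point in $E$ of the contraction $Tg(x):=f(x)+\alpha_n(L_n^{-1}(x))(g-b)(L_n^{-1}(x))$, $x\in I_n$; $0$ is the null function. $\mathcal{P}_0^1$ is linear. *)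

theory Defs
  imports "HOL-Probability.Essential_Supremum" "HOL-Analysis.Analysis"
begin

text \<open>Partition x 0 < ... < x N, I = [x 0, x N], measure = Lebesgue measure on I.
  The affine maps are L_n t = a n * t + c n (so L_n^{-1} y = (y - c n) / a n).\<close>

definition Iset :: "(nat \<Rightarrow> real) \<Rightarrow> nat \<Rightarrow> real set" where
  "Iset x n = (if n = 1 then {x 0..x 1} else {x (n - 1)<..x n})"

definition Linv :: "(nat \<Rightarrow> real) \<Rightarrow> (nat \<Rightarrow> real) \<Rightarrow> nat \<Rightarrow> real \<Rightarrow> real" where
  "Linv a c n y = (y - c n) / a n"

definition Top :: "nat \<Rightarrow> (nat \<Rightarrow> real) \<Rightarrow> (nat \<Rightarrow> real) \<Rightarrow> (nat \<Rightarrow> real)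
    \<Rightarrow> (nat \<Rightarrow> real \<Rightarrow> real) \<Rightarrow> (real \<Rightarrow> real) \<Rightarrow> (real \<Rightarrow> real)
    \<Rightarrow> (real \<Rightarrow> real) \<Rightarrow> real \<Rightarrow> real" where
  "Top N x a c \<alpha> f b g y = f y + (\<Sum>n\<in>{1..N}. indicator (Iset x n) y *
      (\<alpha> n (Linv a c n y) * (g (Linv a c n y) - b (Linv a c n y))))"

text \<open>L^p space (as a set of representatives) for 0 < p <= infinity.\<close>
definition Lp_space :: "ereal \<Rightarrow> real measure \<Rightarrow> (real \<Rightarrow> real) set" where
  "Lp_space p M = {g. g \<in> borel_measurable M \<and>
     (if p = \<infinity> then esssup M (\<lambda>t. ereal \<bar>g t\<bar>) < \<infinity>
      else integrable M (\<lambda>t. \<bar>g t\<bar> powr real_of_ereal p))}"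

definition Lp_size :: "ereal \<Rightarrow> real measure \<Rightarrow> (real \<Rightarrow> real) \<Rightarrow> real" where
  "Lp_size p M g = (if p = \<infinity> then real_of_ereal (esssup M (\<lambda>t. ereal \<bar>g t\<bar>))
     else if 1 \<le> p then (\<integral>t. \<bar>g t\<bar> powr real_of_ereal p \<partial>M) powr (1 / real_of_ereal p)
     else (\<integral>t. \<bar>g t\<bar> powr real_of_ereal p \<partial>M))"

definition is_fixpt :: "nat \<Rightarrow> (nat \<Rightarrow> real) \<Rightarrow> (nat \<Rightarrow> real) \<Rightarrow> (nat \<Rightarrow> real)
    \<Rightarrow> (nat \<Rightarrow> real \<Rightarrow> real) \<Rightarrow> ereal \<Rightarrow> real measure
    \<Rightarrow> (real \<Rightarrow> real) \<Rightarrow> (real \<Rightarrow> real) \<Rightarrow> (real \<Rightarrow> real) \<Rightarrow> bool" where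
  "is_fixpt N x a c \<alpha> p M f b g \<longleftrightarrow>
     g \<in> Lp_space p M \<and> (AE y in M. Top N x a c \<alpha> f b g y = g y)"

text \<open>f *_T b: (a representative of) the unique fixed point.\<close>
definition starT :: "nat \<Rightarrow> (nat \<Rightarrow> real) \<Rightarrow> (nat \<Rightarrow> real) \<Rightarrow> (nat \<Rightarrow> real)
    \<Rightarrow> (nat \<Rightarrow> real \<Rightarrow> real) \<Rightarrow> ereal \<Rightarrow> real measure
    \<Rightarrow> (real \<Rightarrow> real) \<Rightarrow> (real \<Rightarrow> real) \<Rightarrow> (real \<Rightarrow> real)" where
  "starT N x a c \<alpha> p M f b = (SOME g. is_fixpt N x a c \<alpha> p M f b g)"

definition op_size :: "ereal \<Rightarrow> real measure \<Rightarrow> ((real \<Rightarrow> real) \<Rightarrow> (real \<Rightarrow> real)) \<Rightarrow> real" where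
  "op_size p M P = Sup {Lp_size p M (P b) | b. b \<in> Lp_space p M \<and> Lp_size p M b \<le> 1}"

end

theory Submission
  imports Defs
begin

text \<open>Write \<open>A\<close> for the linear part of \<open>T\<close>, so that \<open>g = 0 *\<^sub>T b\<close> satisfies \<open>g = A h\<close> almost
  everywhere, where \<open>h = g - b\<close>. On the piece \<open>I\<^sub>n\<close>, \<open>A h\<close> is \<open>\<alpha>\<^sub>n h\<close> transported by the affine map
  \<open>L\<^sub>n\<close> of slope \<open>a\<^sub>n\<close>, and these slopes sum to 1. A change of variables therefore gives
  \<open>\<integral>|A h|^q = \<Sum>\<^sub>n a\<^sub>n \<integral>|\<alpha>\<^sub>n|^q |h|^q \<le> \<Lambda>^q \<integral>|h|^q\<close>, with equality when \<open>|\<alpha>\<^sub>n| = \<Lambda>\<close>, and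
  likewise \<open>ess sup |A h| \<le> \<Lambda> ess sup |h|\<close>. For the operator norms two more facts are needed:
  \<open>0 *\<^sub>T b\<close> exists, given by the Neumann series \<open>b - \<Sum>\<^sub>k A^k b\<close>, which converges almost
  everywhere because \<open>A^k b\<close> decays like \<open>\<Lambda>^k\<close>; and \<open>\<parallel>0 *\<^sub>T b - b\<parallel>\<close> is bounded on the unit ball,
  since in \<open>h = A h - b\<close> the contribution of \<open>A h\<close> can be absorbed into the left-hand side.\<close>

section \<open>Powers and geometric series\<close>

lemma powr_add_le_add_powr:
  fixes s t q :: real
  assumes "0 < q" "q \<le> 1" "0 \<le> s" "0 \<le> t"
  shows "(s + t) powr q \<le> s powr q + t powr q"
proof (cases "s + t = 0")
  case True
  then show ?thesis using assms by simp
next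
  case False
  let ?w = "s + t"
  have w: "0 < ?w" using False assms by simp
  have "s / ?w \<le> (s / ?w) powr q" "t / ?w \<le> (t / ?w) powr q"
    using powr_mono'[of q 1 "s / ?w"] powr_mono'[of q 1 "t / ?w"] assms w by auto
  then have "?w powr q * (s / ?w + t / ?w) \<le> ?w powr q * ((s / ?w) powr q + (t / ?w) powr q)"
    by (intro mult_left_mono) auto
  also have "\<dots> = s powr q + t powr q"
    using w assms by (simp add: powr_divide distrib_left)
  finally show ?thesis using w by (simp add: add_divide_distrib[symmetric])
qed

lemma powr_add_le_convex_weights:
  fixes s t q \<mu> :: real
  assumes q: "1 \<le> q" and \<mu>: "0 < \<mu>" "\<mu> < 1" and st: "0 \<le> s" "0 \<le> t"
  shows "(s + t) powr q \<le> \<mu> powr (1 - q) * s powr q + (1 - \<mu>) powr (1 - q) * t powr q"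
proof -
  have one_le: "1 \<le> z powr (1 - q)" if "0 < z" "z \<le> 1" for z :: real
    using powr_mono2'[of "1 - q" z 1] that q by simp
  consider "s = 0" | "t = 0" | "0 < s" "0 < t" using st by linarith
  then show ?thesis
  proof cases
    case 1
    then show ?thesis using one_le[of "1 - \<mu>"] \<mu> mult_right_mono[of 1 _ "t powr q"] by auto
  next
    case 2
    then show ?thesis using one_le[of \<mu>] \<mu> mult_right_mono[of 1 _ "s powr q"] by auto
  next
    case 3
    have "(\<mu> *\<^sub>R (s / \<mu>) + (1 - \<mu>) *\<^sub>R (t / (1 - \<mu>))) powr q
       \<le> \<mu> * (s / \<mu>) powr q + (1 - \<mu>) * (t / (1 - \<mu>)) powr q"
      using convex_onD[OF powr_convex[OF q], of "1 - \<mu>" "s / \<mu>" "t / (1 - \<mu>)"] \<mu> 3 by simp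
    then show ?thesis using \<mu> 3 by (simp add: powr_divide powr_diff)
  qed
qed

lemma powr_add_le_weighted:
  fixes q \<Lambda> :: real
  assumes q: "0 < q" and \<Lambda>: "0 \<le> \<Lambda>" "\<Lambda> < 1"
  obtains c K where "0 \<le> c" "0 \<le> K" "c * \<Lambda> powr q < 1"
    "\<And>s t. 0 \<le> s \<Longrightarrow> 0 \<le> t \<Longrightarrow> (s + t) powr q \<le> c * s powr q + K * t powr q"
proof (cases "q \<le> 1")
  case True
  have "\<Lambda> powr q < 1 powr q" using \<Lambda> q by (intro powr_less_mono2) auto
  then show ?thesis using that[of 1 1] powr_add_le_add_powr[OF q True] by simp
next
  case False
  define \<mu> where "\<mu> = (1 + \<Lambda>) / 2"
  have \<mu>: "0 < \<mu>" "\<mu> < 1" "\<Lambda> \<le> \<mu>" using \<Lambda> by (auto simp: \<mu>_def)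
  have "\<mu> powr (1 - q) * \<Lambda> powr q \<le> \<mu> powr (1 - q) * \<mu> powr q"
    using \<mu> \<Lambda> q by (intro mult_left_mono powr_mono2) auto
  also have "\<dots> = \<mu>" using \<mu> by (simp flip: powr_add)
  finally show ?thesis
    using that[of "\<mu> powr (1 - q)" "(1 - \<mu>) powr (1 - q)"] powr_add_le_convex_weights[of q \<mu>] \<mu> False
    by auto
qed

lemma powr_powr_inverse_mult:
  fixes L r q :: real
  assumes "0 \<le> L" "0 < q"
  shows "(L powr q * r) powr (1 / q) = L * r powr (1 / q)"
  using assms by (simp add: powr_mult powr_powr)

lemma abs_summable_geometric_bound:
  fixes f :: "nat \<Rightarrow> real"
  assumes f: "\<And>k. \<bar>f k\<bar> \<le> K * r ^ k" and r: "0 \<le> r" "r < 1"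
  shows "summable (\<lambda>k. \<bar>f k\<bar>)" "\<bar>\<Sum>k. f k\<bar> \<le> K / (1 - r)"
proof -
  have geom: "summable (\<lambda>k. K * r ^ k)" using r by (intro summable_mult summable_geometric) simp
  show abs: "summable (\<lambda>k. \<bar>f k\<bar>)" by (rule summable_comparison_test'[OF geom]) (use f in simp)
  have "\<bar>\<Sum>k. f k\<bar> \<le> (\<Sum>k. \<bar>f k\<bar>)" by (rule summable_rabs[OF abs])
  also have "\<dots> \<le> (\<Sum>k. K * r ^ k)" by (rule suminf_le[OF _ abs geom]) (use f in simp)
  also have "\<dots> = K / (1 - r)" using r by (simp add: suminf_mult summable_geometric suminf_geometric)
  finally show "\<bar>\<Sum>k. f k\<bar> \<le> K / (1 - r)" .
qed

section \<open>Sizes of functions in Lp\<close>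

abbreviation integral_abs_powr :: "real \<Rightarrow> 'a measure \<Rightarrow> ('a \<Rightarrow> real) \<Rightarrow> ennreal" where
  "integral_abs_powr q M f \<equiv> \<integral>\<^sup>+t. ennreal (\<bar>f t\<bar> powr q) \<partial>M"

lemma Lp_space_borel_measurable: "f \<in> Lp_space p M \<Longrightarrow> f \<in> borel_measurable M"
  by (simp add: Lp_space_def)

lemma Lp_space_ereal_iff:
  "f \<in> Lp_space (ereal q) M \<longleftrightarrow> f \<in> borel_measurable M \<and> integral_abs_powr q M f < \<infinity>"
  by (auto simp: Lp_space_def integrable_iff_bounded)

lemma Lp_size_ereal:
  "f \<in> borel_measurable M \<Longrightarrow> Lp_size (ereal q) M f =
     (if 1 \<le> q then enn2real (integral_abs_powr q M f) powr (1 / q)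
      else enn2real (integral_abs_powr q M f))"
  by (simp add: Lp_size_def integral_eq_nn_integral)

lemma esssup_abs_nonneg:
  assumes "emeasure M (space M) \<noteq> 0"
  shows "0 \<le> esssup M (\<lambda>t. ereal \<bar>f t\<bar>)"
proof -
  have "esssup M (\<lambda>t. ereal 0) \<le> esssup M (\<lambda>t. ereal \<bar>f t\<bar>)"
    by (rule esssup_mono) auto
  then show ?thesis using esssup_const[OF assms, of "ereal 0"] by (simp add: zero_ereal_def)
qed

lemma esssup_abs_eq_Lp_size:
  assumes "emeasure M (space M) \<noteq> 0" "f \<in> Lp_space \<infinity> M"
  shows "esssup M (\<lambda>t. ereal \<bar>f t\<bar>) = ereal (Lp_size \<infinity> M f)" "0 \<le> Lp_size \<infinity> M f"
  using esssup_abs_nonneg[OF assms(1), of f] assms(2)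
  by (cases "esssup M (\<lambda>t. ereal \<bar>f t\<bar>)"; simp add: Lp_space_def Lp_size_def)+

lemma AE_abs_le_Lp_size:
  assumes "emeasure M (space M) \<noteq> 0" "f \<in> Lp_space \<infinity> M"
  shows "AE t in M. \<bar>f t\<bar> \<le> Lp_size \<infinity> M f"
  using esssup_AE[of "\<lambda>t. ereal \<bar>f t\<bar>" M] unfolding esssup_abs_eq_Lp_size[OF assms] by simp

lemma Lp_size_infinity_le:
  assumes M: "emeasure M (space M) \<noteq> 0" and f: "f \<in> borel_measurable M"
    and le: "AE t in M. \<bar>f t\<bar> \<le> C"
  shows "f \<in> Lp_space \<infinity> M" "Lp_size \<infinity> M f \<le> C"
proof -
  have "esssup M (\<lambda>t. ereal \<bar>f t\<bar>) \<le> ereal C"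
    using f le by (intro esssup_I) auto
  moreover have "0 \<le> esssup M (\<lambda>t. ereal \<bar>f t\<bar>)" by (rule esssup_abs_nonneg[OF M])
  ultimately show "f \<in> Lp_space \<infinity> M" "Lp_size \<infinity> M f \<le> C"
    using f by (cases "esssup M (\<lambda>t. ereal \<bar>f t\<bar>)"; simp add: Lp_space_def Lp_size_def)+
qed

lemma integral_abs_powr_diff_le:
  assumes f: "f \<in> borel_measurable M" and g: "g \<in> borel_measurable M"
    and q: "0 < q" and cK: "0 \<le> c" "0 \<le> K"
    and le: "\<And>s t. 0 \<le> s \<Longrightarrow> 0 \<le> t \<Longrightarrow> (s + t) powr q \<le> c * s powr q + K * t powr q"
  shows "integral_abs_powr q M (\<lambda>t. f t - g t)
     \<le> ennreal c * integral_abs_powr q M f + ennreal K * integral_abs_powr q M g"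
proof -
  have "integral_abs_powr q M (\<lambda>t. f t - g t)
      \<le> (\<integral>\<^sup>+t. ennreal c * ennreal (\<bar>f t\<bar> powr q) + ennreal K * ennreal (\<bar>g t\<bar> powr q) \<partial>M)"
  proof (rule nn_integral_mono)
    fix t
    have "\<bar>f t - g t\<bar> powr q \<le> (\<bar>f t\<bar> + \<bar>g t\<bar>) powr q" using q by (intro powr_mono2) auto
    also have "\<dots> \<le> c * \<bar>f t\<bar> powr q + K * \<bar>g t\<bar> powr q" by (rule le) auto
    finally show "ennreal (\<bar>f t - g t\<bar> powr q)
        \<le> ennreal c * ennreal (\<bar>f t\<bar> powr q) + ennreal K * ennreal (\<bar>g t\<bar> powr q)"
      using cK
      by (simp add: ennreal_mult[symmetric] ennreal_plus[symmetric] ennreal_leI del: ennreal_plus)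
  qed
  also have "\<dots> = ennreal c * integral_abs_powr q M f + ennreal K * integral_abs_powr q M g"
    using f g by (simp add: nn_integral_cmult nn_integral_add)
  finally show ?thesis .
qed

lemma Lp_space_diff:
  assumes p: "0 < p" and f: "f \<in> Lp_space p M" and g: "g \<in> Lp_space p M"
  shows "(\<lambda>t. f t - g t) \<in> Lp_space p M"
proof (cases p)
  case PInf
  have "esssup M (\<lambda>t. ereal \<bar>f t - g t\<bar>) \<le> esssup M (\<lambda>t. ereal \<bar>f t\<bar> + ereal \<bar>g t\<bar>)"
    using f g by (intro esssup_mono) (auto simp: PInf Lp_space_def)
  also have "\<dots> \<le> esssup M (\<lambda>t. ereal \<bar>f t\<bar>) + esssup M (\<lambda>t. ereal \<bar>g t\<bar>)"
    by (rule esssup_add)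
  also have "\<dots> < \<infinity>" using f g by (simp add: PInf Lp_space_def)
  finally show ?thesis using f g by (auto simp: PInf Lp_space_def)
next
  case (real q)
  with p have q: "0 < q" by simp
  obtain c K where cK: "0 \<le> c" "0 \<le> K"
    and le: "\<And>s t. 0 \<le> s \<Longrightarrow> 0 \<le> t \<Longrightarrow> (s + t) powr q \<le> c * s powr q + K * t powr q"
    using powr_add_le_weighted[OF q, of 0] by auto
  have fm: "f \<in> borel_measurable M" and gm: "g \<in> borel_measurable M"
    using f g by (auto simp: real Lp_space_ereal_iff)
  have "integral_abs_powr q M (\<lambda>t. f t - g t)
      \<le> ennreal c * integral_abs_powr q M f + ennreal K * integral_abs_powr q M g"
    by (rule integral_abs_powr_diff_le[OF fm gm q cK le])
  also have "\<dots> < \<infinity>"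
    using f g by (simp add: real Lp_space_ereal_iff ennreal_mult_less_top)
  finally show ?thesis using fm gm by (simp add: real Lp_space_ereal_iff)
qed (use p in simp)

lemma Lp_size_cong_AE:
  assumes "f \<in> borel_measurable M" "g \<in> borel_measurable M" "AE t in M. f t = g t"
  shows "Lp_size p M f = Lp_size p M g"
proof -
  have "esssup M (\<lambda>t. ereal \<bar>f t\<bar>) = esssup M (\<lambda>t. ereal \<bar>g t\<bar>)"
    using assms by (intro esssup_AE_cong) (auto elim: eventually_mono)
  moreover have "(\<integral>t. \<bar>f t\<bar> powr real_of_ereal p \<partial>M) = (\<integral>t. \<bar>g t\<bar> powr real_of_ereal p \<partial>M)"
    using assms by (intro integral_cong_AE) (auto elim: eventually_mono)
  ultimately show ?thesis by (simp add: Lp_size_def)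
qed

lemma zero_in_Lp_space: "(\<lambda>_. 0) \<in> Lp_space p M"
proof -
  have "esssup M (\<lambda>t. ereal \<bar>0\<bar>) \<le> 0" by (rule esssup_I) auto
  then show ?thesis by (auto simp: Lp_space_def)
qed

lemma Lp_size_zero_le: "Lp_size p M (\<lambda>_. 0) \<le> 0"
proof -
  have "esssup M (\<lambda>t. ereal \<bar>0\<bar>) \<le> 0" by (rule esssup_I) auto
  then have "real_of_ereal (esssup M (\<lambda>t. ereal \<bar>0\<bar>)) \<le> 0"
    by (cases "esssup M (\<lambda>t. ereal \<bar>0\<bar>)") auto
  then show ?thesis by (simp add: Lp_size_def)
qed

lemma op_size_le:
  assumes L: "0 \<le> L"
    and le: "\<And>b. b \<in> Lp_space p M \<Longrightarrow> Lp_size p M b \<le> 1 \<Longrightarrow> Lp_size p M (P b) \<le> L * Lp_size p M (Q b)"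
    and bdd: "bdd_above {Lp_size p M (Q b) | b. b \<in> Lp_space p M \<and> Lp_size p M b \<le> 1}"
  shows "op_size p M P \<le> L * op_size p M Q"
  unfolding op_size_def
proof (rule cSup_least)
  show "{Lp_size p M (P b) | b. b \<in> Lp_space p M \<and> Lp_size p M b \<le> 1} \<noteq> {}"
    using zero_in_Lp_space Lp_size_zero_le order.trans[OF Lp_size_zero_le zero_le_one] by blast
next
  fix z assume "z \<in> {Lp_size p M (P b) | b. b \<in> Lp_space p M \<and> Lp_size p M b \<le> 1}"
  then obtain b where b: "z = Lp_size p M (P b)" "b \<in> Lp_space p M" "Lp_size p M b \<le> 1" by blast
  have "Lp_size p M (Q b) \<le> Sup {Lp_size p M (Q b) | b. b \<in> Lp_space p M \<and> Lp_size p M b \<le> 1}"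
    using b by (intro cSup_upper[OF _ bdd]) auto
  then show "z \<le> L * Sup {Lp_size p M (Q b) | b. b \<in> Lp_space p M \<and> Lp_size p M b \<le> 1}"
    using le[OF b(2,3)] b(1) L by (meson mult_left_mono order.trans)
qed

lemma Lp_size_ereal_le_1_iff:
  assumes q: "0 < q" and f: "f \<in> borel_measurable M"
  shows "Lp_size (ereal q) M f \<le> 1 \<longleftrightarrow> enn2real (integral_abs_powr q M f) \<le> 1"
proof -
  have "r powr (1 / q) \<le> 1 \<longleftrightarrow> r \<le> 1" if r: "0 \<le> r" for r :: real
  proof
    assume "r powr (1 / q) \<le> 1"
    moreover have "1 < r \<Longrightarrow> 1 powr (1 / q) < r powr (1 / q)" using q by (intro powr_less_mono2) auto
    ultimately show "r \<le> 1" by force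
  qed (use q r in \<open>simp add: powr_le1\<close>)
  then show ?thesis by (simp add: Lp_size_ereal[OF f])
qed

lemma Lp_size_ereal_le_scaled:
  assumes q: "0 < q" and L: "0 \<le> L"
    and f: "f \<in> borel_measurable M" and g: "g \<in> borel_measurable M"
    and fin: "integral_abs_powr q M g < \<infinity>"
    and le: "integral_abs_powr q M f \<le> ennreal (L powr q) * integral_abs_powr q M g"
  shows "Lp_size (ereal q) M f \<le> (if 1 \<le> q then L else L powr q) * Lp_size (ereal q) M g"
proof -
  have "enn2real (integral_abs_powr q M f) \<le> L powr q * enn2real (integral_abs_powr q M g)"
    using enn2real_mono[OF le] fin by (simp add: enn2real_mult ennreal_mult_less_top)
  then show ?thesis
    using q L by (auto simp: Lp_size_ereal[OF f] Lp_size_ereal[OF g] powr_powr_inverse_mult[symmetric]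
        intro: powr_mono2)
qed

lemma Lp_size_ereal_eq_scaled:
  assumes q: "0 < q" and L: "0 \<le> L"
    and f: "f \<in> borel_measurable M" and g: "g \<in> borel_measurable M"
    and eq: "integral_abs_powr q M f = ennreal (L powr q) * integral_abs_powr q M g"
  shows "Lp_size (ereal q) M f = (if 1 \<le> q then L else L powr q) * Lp_size (ereal q) M g"
  using q L by (simp add: Lp_size_ereal[OF f] Lp_size_ereal[OF g] eq enn2real_mult powr_powr_inverse_mult)

lemma summable_if_abs_powr_geometric:
  fixes f :: "nat \<Rightarrow> real"
  assumes f: "\<And>k. \<bar>f k\<bar> powr q \<le> C * \<nu> ^ k" and q: "0 < q" and \<nu>: "0 < \<nu>" "\<nu> < 1"
  shows "summable (\<lambda>k. \<bar>f k\<bar>)" "\<bar>\<Sum>k. f k\<bar> powr q \<le> (1 / (1 - \<nu> powr (1 / q))) powr q * C"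
proof -
  have \<nu>q: "0 \<le> \<nu> powr (1 / q)" "\<nu> powr (1 / q) < 1"
    using \<nu> q powr01_less_one[of \<nu> "1 / q"] by auto
  have C: "0 \<le> C" using order.trans[OF powr_ge_zero f[of 0]] by simp
  have bound: "\<bar>f k\<bar> \<le> C powr (1 / q) * (\<nu> powr (1 / q)) ^ k" for k
  proof -
    have "(\<bar>f k\<bar> powr q) powr (1 / q) \<le> (C * \<nu> ^ k) powr (1 / q)"
      using f q by (intro powr_mono2) auto
    then show ?thesis
      using q \<nu> C by (simp add: powr_powr powr_mult powr_realpow[symmetric] powr_power mult.commute)
  qed
  show "summable (\<lambda>k. \<bar>f k\<bar>)" by (rule abs_summable_geometric_bound(1)[OF bound \<nu>q])
  have "\<bar>\<Sum>k. f k\<bar> powr q \<le> (C powr (1 / q) / (1 - \<nu> powr (1 / q))) powr q"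
    using abs_summable_geometric_bound(2)[OF bound \<nu>q] q by (intro powr_mono2) auto
  also have "\<dots> = (1 / (1 - \<nu> powr (1 / q))) powr q * C"
    using q \<nu>q C by (simp add: powr_divide powr_powr)
  finally show "\<bar>\<Sum>k. f k\<bar> powr q \<le> (1 / (1 - \<nu> powr (1 / q))) powr q * C" .
qed

lemma AE_summable_if_geometric_decay:
  fixes u :: "nat \<Rightarrow> 'a \<Rightarrow> real"
  assumes u: "\<And>k. u k \<in> borel_measurable M" and q: "0 < q" and r: "0 \<le> r" "r < 1"
    and decay: "\<And>k. integral_abs_powr q M (u k) \<le> ennreal (r ^ k) * B" and B: "B < \<infinity>"
  shows "AE t in M. summable (\<lambda>k. \<bar>u k t\<bar>)" "integral_abs_powr q M (\<lambda>t. \<Sum>k. u k t) < \<infinity>"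
proof -
  define \<nu> where "\<nu> = (1 + r) / 2"
  have \<nu>: "0 < \<nu>" "\<nu> < 1" "r < \<nu>" using r by (auto simp: \<nu>_def)
  \<comment> \<open>Weighting the \<open>k\<close>-th term by \<open>1 / \<nu> ^ k\<close> keeps the series of integrals convergent, so
    the weighted series \<open>C\<close> is finite almost everywhere, where it bounds \<open>\<bar>u k t\<bar> powr q\<close> by \<open>C t * \<nu> ^ k\<close>.\<close>
  define C where "C t = (\<Sum>k. ennreal (\<bar>u k t\<bar> powr q / \<nu> ^ k))" for t
  have C_meas: "C \<in> borel_measurable M" unfolding C_def using u by measurable
  have "(\<integral>\<^sup>+t. C t \<partial>M) = (\<Sum>k. \<integral>\<^sup>+t. ennreal (1 / \<nu> ^ k) * ennreal (\<bar>u k t\<bar> powr q) \<partial>M)"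
    unfolding C_def using u \<nu> by (subst nn_integral_suminf) (auto simp: ennreal_mult[symmetric])
  also have "\<dots> = (\<Sum>k. ennreal (1 / \<nu> ^ k) * integral_abs_powr q M (u k))"
    using u by (simp add: nn_integral_cmult)
  also have "\<dots> \<le> (\<Sum>k. ennreal ((r / \<nu>) ^ k) * B)"
  proof (rule suminf_le[OF _ summableI summableI])
    fix k
    have "ennreal (1 / \<nu> ^ k) * integral_abs_powr q M (u k) \<le> ennreal (1 / \<nu> ^ k) * (ennreal (r ^ k) * B)"
      by (intro mult_left_mono decay) simp
    then show "ennreal (1 / \<nu> ^ k) * integral_abs_powr q M (u k) \<le> ennreal ((r / \<nu>) ^ k) * B"
      using \<nu> r by (simp add: ennreal_mult[symmetric] mult.assoc[symmetric] power_divide)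
  qed
  also have "\<dots> = ennreal (1 / (1 - r / \<nu>)) * B"
  proof -
    have "(\<Sum>k. ennreal ((r / \<nu>) ^ k)) = ennreal (1 / (1 - r / \<nu>))"
      using \<nu> r by (intro suminf_ennreal_eq geometric_sums) auto
    then show ?thesis by (simp add: ennreal_suminf_multc)
  qed
  also have "\<dots> < \<infinity>" using B by (simp add: ennreal_mult_less_top)
  finally have C_fin: "(\<integral>\<^sup>+t. C t \<partial>M) < \<infinity>" .
  define D where "D = (1 / (1 - \<nu> powr (1 / q))) powr q"
  have pointwise: "summable (\<lambda>k. \<bar>u k t\<bar>) \<and> ennreal (\<bar>\<Sum>k. u k t\<bar> powr q) \<le> ennreal D * C t"
    if Ct: "C t < \<infinity>" for t
  proof -
    have "\<bar>u k t\<bar> powr q \<le> enn2real (C t) * \<nu> ^ k" for k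
    proof -
      have "ennreal (\<bar>u k t\<bar> powr q / \<nu> ^ k) \<le> C t"
        unfolding C_def using sum_le_suminf[OF summableI, of "{k}"] by simp
      also have "C t = ennreal (enn2real (C t))" using Ct by simp
      finally show ?thesis using \<nu> by (simp add: divide_le_eq)
    qed
    note geometric = summable_if_abs_powr_geometric[OF this q \<nu>(1,2)]
    have "ennreal (\<bar>\<Sum>k. u k t\<bar> powr q) \<le> ennreal (D * enn2real (C t))"
      using geometric(2) by (intro ennreal_leI) (simp add: D_def)
    also have "\<dots> = ennreal D * C t"
      using Ct by (simp add: D_def ennreal_mult less_top)
    finally show ?thesis using geometric(1) by simp
  qed
  have AE_C: "AE t in M. C t < \<infinity>"
    using nn_integral_PInf_AE[OF C_meas] C_fin by (simp add: less_top)
  then show "AE t in M. summable (\<lambda>k. \<bar>u k t\<bar>)"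
    by (rule eventually_mono) (use pointwise in blast)
  have "integral_abs_powr q M (\<lambda>t. \<Sum>k. u k t) \<le> (\<integral>\<^sup>+t. ennreal D * C t \<partial>M)"
    using AE_C by (intro nn_integral_mono_AE) (auto elim!: eventually_mono simp: pointwise)
  also have "\<dots> = ennreal D * (\<integral>\<^sup>+t. C t \<partial>M)" by (rule nn_integral_cmult[OF C_meas])
  also have "\<dots> < \<infinity>" using C_fin by (simp add: ennreal_mult_less_top)
  finally show "integral_abs_powr q M (\<lambda>t. \<Sum>k. u k t) < \<infinity>" .
qed

section \<open>Affine partitions of an interval\<close>

lemma AE_lebesgue_affine:
  fixes c t :: real
  assumes c: "c \<noteq> 0" and P: "AE y in lebesgue. P y"
  shows "AE x in lebesgue. P (t + c * x)"
proof -
  obtain Z where Z: "\<And>y. y \<notin> Z \<Longrightarrow> P y" "Z \<in> null_sets lebesgue"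
    using AE_E3[OF P] by auto
  have "(\<lambda>x. t + c * x) -` Z = (\<lambda>y. (1 / c) *\<^sub>R y + (- t / c)) ` Z"
    using c by (force simp: field_simps)
  then have "emeasure lebesgue ((\<lambda>x. t + c * x) -` Z) = 0"
    using emeasure_lebesgue_affine[of "1 / c" "- t / c" Z] Z(2) by (simp add: null_sets_def)
  moreover have "(\<lambda>x. t + c * x) -` Z \<in> sets lebesgue"
    using measurable_sets[OF lebesgue_affine_measurable[where c = "\<lambda>_. c" and t = t], of Z] c Z(2)
    by auto
  ultimately show ?thesis
    using Z(1) by (intro AE_I'[of "(\<lambda>x. t + c * x) -` Z"]) auto
qed

locale affine_partition =
  fixes N :: nat and x a c :: "nat \<Rightarrow> real"
  assumes N_pos: "0 < N"
    and partition: "\<And>i. i < N \<Longrightarrow> x i < x (Suc i)"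
    and L_x0: "\<And>n. n \<in> {1..N} \<Longrightarrow> a n * x 0 + c n = x (n - 1)"
    and L_xN: "\<And>n. n \<in> {1..N} \<Longrightarrow> a n * x N + c n = x n"
begin

abbreviation "I \<equiv> {x 0..x N}"

abbreviation "M \<equiv> lebesgue_on I"

lemma x_less: "i < j \<Longrightarrow> j \<le> N \<Longrightarrow> x i < x j"
proof (induction j)
  case (Suc j)
  then show ?case using partition[of j] by (cases "i = j") auto
qed simp

lemma x_le: "i \<le> j \<Longrightarrow> j \<le> N \<Longrightarrow> x i \<le> x j"
  using x_less[of i j] by (cases "i = j") auto

lemma emeasure_M_space_neq_0: "emeasure M (space M) \<noteq> 0"
  using x_less[of 0 N] N_pos by (simp add: emeasure_restrict_space emeasure_completion)

lemma a_eq: "n \<in> {1..N} \<Longrightarrow> a n = (x n - x (n - 1)) / (x N - x 0)"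
  using L_x0[of n] L_xN[of n] x_less[of 0 N] N_pos by (auto simp: field_simps)

lemma a_pos: "n \<in> {1..N} \<Longrightarrow> 0 < a n"
  using a_eq[of n] x_less[of "n - 1" n] x_less[of 0 N] N_pos by auto

lemma sum_a: "(\<Sum>n\<in>{1..N}. a n) = 1"
proof -
  have "(\<Sum>n\<in>{1..N}. a n) = (\<Sum>n\<in>{1..N}. x n - x (n - 1)) / (x N - x 0)"
    by (simp add: a_eq sum_divide_distrib)
  also have "(\<Sum>n\<in>{1..k}. x n - x (n - 1)) = x k - x 0" for k
    by (induction k) (auto simp: sum.atLeast1_atMost_eq)
  finally show ?thesis using x_less[of 0 N] N_pos by simp
qed

lemma sum_a_mult: "(\<Sum>n\<in>{1..N}. ennreal (a n) * z) = z"
proof -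
  have "(\<Sum>n\<in>{1..N}. ennreal (a n)) = ennreal (\<Sum>n\<in>{1..N}. a n)"
    using a_pos by (intro sum_ennreal) (simp add: less_imp_le)
  then show ?thesis unfolding sum_distrib_right[symmetric] sum_a by simp
qed

lemma Iset_subset:
  assumes n: "n \<in> {1..N}"
  shows "Iset x n \<subseteq> I"
proof -
  have "x 0 \<le> x (n - 1)" "x n \<le> x N" using n x_le[of 0 "n - 1"] x_le[of n N] by auto
  then show ?thesis by (auto simp: Iset_def)
qed

lemma Iset_cover: "y \<in> I \<Longrightarrow> \<exists>m\<in>{1..N}. y \<in> Iset x m"
proof -
  have "\<exists>m\<in>{1..k}. y \<in> Iset x m" if "1 \<le> k" "k \<le> N" "y \<in> {x 0..x k}" for k
    using that
  proof (induction k)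
    case (Suc k)
    show ?case
    proof (cases "k = 0 \<or> x k < y")
      case True
      then have "y \<in> Iset x (Suc k)" using Suc.prems by (auto simp: Iset_def)
      then show ?thesis by auto
    next
      case False
      then show ?thesis using Suc by force
    qed
  qed simp
  then show "y \<in> I \<Longrightarrow> ?thesis" using N_pos by auto
qed

lemma Iset_disjoint:
  assumes "m \<in> {1..N}" "n \<in> {1..N}" "y \<in> Iset x m" "y \<in> Iset x n"
  shows "m = n"
proof -
  have False if "k < l" "k \<in> {1..N}" "l \<in> {1..N}" "y \<in> Iset x k" "y \<in> Iset x l" for k l
  proof -
    have "x k \<le> x (l - 1)" using that x_le[of k "l - 1"] by auto
    moreover have "y \<le> x k" "x (l - 1) < y" using that by (auto simp: Iset_def split: if_splits)
    ultimately show False by simp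
  qed
  then show ?thesis using assms by (metis linorder_neqE_nat)
qed

lemma sum_indicator_Iset:
  fixes G :: "nat \<Rightarrow> 'b::semiring_1"
  assumes m: "m \<in> {1..N}" "y \<in> Iset x m"
  shows "(\<Sum>n\<in>{1..N}. indicator (Iset x n) y * G n) = G m"
proof -
  have "(\<Sum>n\<in>{1..N}. indicator (Iset x n) y * G n)
      = indicator (Iset x m) y * G m + (\<Sum>n\<in>{1..N} - {m}. indicator (Iset x n) y * G n)"
    by (rule sum.remove) (use m in auto)
  also have "(\<Sum>n\<in>{1..N} - {m}. indicator (Iset x n) y * G n) = 0"
  proof (rule sum.neutral, rule ballI)
    fix n assume "n \<in> {1..N} - {m}"
    then have "y \<notin> Iset x n" using Iset_disjoint[OF _ m(1) _ m(2)] by blast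
    then show "indicator (Iset x n) y * G n = 0" by simp
  qed
  finally show ?thesis using m by simp
qed

context
  fixes n assumes n: "n \<in> {1..N}"
begin

lemma Linv_affine: "Linv a c n y = - c n / a n + (1 / a n) * y"
  using a_pos[OF n] by (simp add: Linv_def field_simps)

lemma Linv_in_I_iff: "Linv a c n y \<in> I \<longleftrightarrow> y \<in> {x (n - 1)..x n}"
proof -
  have an: "0 < a n" using a_pos[OF n] .
  have "x 0 \<le> (y - c n) / a n \<longleftrightarrow> x (n - 1) \<le> y"
    using L_x0[OF n] an by (auto simp: field_simps)
  moreover have "(y - c n) / a n \<le> x N \<longleftrightarrow> y \<le> x n"
    using L_xN[OF n] an by (auto simp: field_simps)
  ultimately show ?thesis by (simp add: Linv_def)
qed

lemma Linv_in_I: "y \<in> Iset x n \<Longrightarrow> Linv a c n y \<in> I"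
  using Linv_in_I_iff[of y] by (auto simp: Iset_def split: if_splits)

lemma Linv_L: "Linv a c n (a n * t + c n) = t"
  using a_pos[OF n] by (simp add: Linv_def)

lemma L_in_Icc: "t \<in> I \<Longrightarrow> a n * t + c n \<in> {x (n - 1)..x n}"
  by (metis Linv_in_I_iff Linv_L)

lemma L_in_I: "t \<in> I \<Longrightarrow> a n * t + c n \<in> I"
  using L_in_Icc n x_le[of 0 "n - 1"] x_le[of n N] by fastforce

lemma AE_M_Linv:
  assumes "AE t in M. P t"
  shows "AE y in M. y \<in> Iset x n \<longrightarrow> P (Linv a c n y)"
proof -
  have "AE t in lebesgue. t \<in> I \<longrightarrow> P t" using assms by (simp add: AE_restrict_space_iff)
  then have "AE y in lebesgue. Linv a c n y \<in> I \<longrightarrow> P (Linv a c n y)"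
    using AE_lebesgue_affine[of "1 / a n" _ "- c n / a n"] a_pos[OF n] by (simp add: Linv_affine)
  then have "AE y in lebesgue. y \<in> I \<longrightarrow> y \<in> Iset x n \<longrightarrow> P (Linv a c n y)"
    by (rule eventually_mono) (use Linv_in_I in blast)
  then show ?thesis by (simp add: AE_restrict_space_iff)
qed

lemma AE_M_L:
  assumes "AE y in M. P y"
  shows "AE t in M. P (a n * t + c n)"
proof -
  have "AE y in lebesgue. y \<in> I \<longrightarrow> P y" using assms by (simp add: AE_restrict_space_iff)
  then have "AE t in lebesgue. c n + a n * t \<in> I \<longrightarrow> P (c n + a n * t)"
    using AE_lebesgue_affine[of "a n"] a_pos[OF n] by simp
  then have "AE t in lebesgue. t \<in> I \<longrightarrow> P (a n * t + c n)"
    by (rule eventually_mono) (metis L_in_I add.commute)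
  then show ?thesis by (simp add: AE_restrict_space_iff)
qed

lemma measurable_Iset_Linv:
  fixes f :: "real \<Rightarrow> 'b::{semiring_1, topological_space}"
  assumes f: "f \<in> borel_measurable M"
  shows "(\<lambda>y. indicator (Iset x n) y * f (Linv a c n y)) \<in> borel_measurable M"
proof -
  let ?F = "\<lambda>t. if t \<in> I then f t else 0"
  have "?F \<in> borel_measurable lebesgue"
    using measurable_If_restrict_space_iff[of lebesgue "\<lambda>t. t \<in> I" f "\<lambda>_. 0" borel] f
    unfolding Collect_mem_eq by simp
  moreover have "(\<lambda>y. - c n / a n + (1 / a n) * y) \<in> lebesgue \<rightarrow>\<^sub>M lebesgue"
    using lebesgue_affine_measurable[where c = "\<lambda>_. 1 / a n" and t = "- c n / a n"] a_pos[OF n]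
    by simp
  ultimately have "(\<lambda>y. ?F (- c n / a n + (1 / a n) * y)) \<in> borel_measurable lebesgue"
    by (rule measurable_compose[rotated])
  from measurable_restrict_space1[OF this]
  have "(\<lambda>y. ?F (Linv a c n y)) \<in> borel_measurable M"
    by (simp only: Linv_affine)
  moreover have "Iset x n \<inter> space M \<in> sets M"
    using Iset_subset[OF n] by (auto simp: sets_restrict_space_iff Iset_def)
  ultimately have "(\<lambda>y. if y \<in> Iset x n then ?F (Linv a c n y) else 0) \<in> borel_measurable M"
    by (intro measurable_If_set) simp_all
  moreover have "(\<lambda>y. if y \<in> Iset x n then ?F (Linv a c n y) else 0)
      = (\<lambda>y. indicator (Iset x n) y * f (Linv a c n y))"
  proof
    fix y
    show "(if y \<in> Iset x n then ?F (Linv a c n y) else 0) = indicator (Iset x n) y * f (Linv a c n y)"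
      by (cases "y \<in> Iset x n") (simp_all only: if_True if_False Linv_in_I indicator_simps
          not_False_eq_True mult_1_left mult_zero_left)
  qed
  ultimately show ?thesis by (simp only:)
qed

lemma indicator_Iset_Linv_eq:
  fixes f :: "real \<Rightarrow> 'b::semiring_1"
  assumes y: "y \<noteq> x (n - 1)"
  shows "indicator (Iset x n) y * f (Linv a c n y) * indicator I y
    = f (Linv a c n y) * indicator I (Linv a c n y)"
proof -
  have "y \<in> Iset x n \<longleftrightarrow> y \<in> {x (n - 1)..x n}"
    using y by (auto simp: Iset_def)
  then have iff: "y \<in> Iset x n \<longleftrightarrow> Linv a c n y \<in> I"
    using Linv_in_I_iff by blast
  show ?thesis
  proof (cases "y \<in> Iset x n")
    case True
    moreover have "y \<in> I" using True Iset_subset[OF n] by blast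
    moreover have "Linv a c n y \<in> I" using True iff by blast
    ultimately show ?thesis by (simp only: indicator_simps mult_1_left mult_1_right)
  next
    case False
    moreover have "Linv a c n y \<notin> I" using False iff by blast
    ultimately show ?thesis
      by (simp only: indicator_simps not_False_eq_True mult_zero_left mult_zero_right)
  qed
qed

lemma nn_integral_Iset_Linv:
  assumes f: "f \<in> borel_measurable M"
  shows "(\<integral>\<^sup>+y. indicator (Iset x n) y * f (Linv a c n y) \<partial>M) = ennreal (a n) * (\<integral>\<^sup>+t. f t \<partial>M)"
proof -
  let ?F = "\<lambda>t. f t * indicator I t"
  have F: "?F \<in> borel_measurable lebesgue"
    using f borel_measurable_restrict_space_iff_ennreal[of I lebesgue f] by simp
  have "(\<integral>\<^sup>+y. indicator (Iset x n) y * f (Linv a c n y) \<partial>M)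
      = (\<integral>\<^sup>+y. indicator (Iset x n) y * f (Linv a c n y) * indicator I y \<partial>lebesgue)"
    by (simp add: nn_integral_restrict_space)
  also have "\<dots> = (\<integral>\<^sup>+y. ?F (Linv a c n y) \<partial>lebesgue)"
    using AE_completion[OF AE_lborel_singleton, of "x (n - 1)"]
    by (intro nn_integral_cong_AE) (auto elim!: eventually_mono intro: indicator_Iset_Linv_eq)
  also have "\<dots> = ennreal (a n) * (\<integral>\<^sup>+y. ?F y \<partial>lebesgue)"
  proof -
    have affine: "(\<integral>\<^sup>+y. ?F y \<partial>lebesgue) = ennreal (1 / a n) * (\<integral>\<^sup>+y. ?F (Linv a c n y) \<partial>lebesgue)"
      using nn_integral_real_affine_lebesgue[OF F, of "1 / a n" "- c n / a n"] a_pos[OF n]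
      by (simp only: Linv_affine) simp
    have one: "ennreal (a n) * ennreal (1 / a n) = 1"
      using a_pos[OF n] by (simp flip: ennreal_mult)
    show ?thesis unfolding affine mult.assoc[symmetric] one mult_1 ..
  qed
  also have "\<dots> = ennreal (a n) * (\<integral>\<^sup>+t. f t \<partial>M)"
    by (simp add: nn_integral_restrict_space)
  finally show ?thesis .
qed

end

lemma AE_M_Linv_all:
  assumes "\<And>n. n \<in> {1..N} \<Longrightarrow> AE t in M. P n t"
  shows "AE y in M. \<forall>n\<in>{1..N}. y \<in> Iset x n \<longrightarrow> P n (Linv a c n y)"
  using AE_M_Linv assms by (intro AE_finite_allI) auto

end

section \<open>The linear part of the operator\<close>

definition Top_lin :: "nat \<Rightarrow> (nat \<Rightarrow> real) \<Rightarrow> (nat \<Rightarrow> real) \<Rightarrow> (nat \<Rightarrow> real)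
    \<Rightarrow> (nat \<Rightarrow> real \<Rightarrow> real) \<Rightarrow> (real \<Rightarrow> real) \<Rightarrow> real \<Rightarrow> real" where
  "Top_lin N x a c \<alpha> g y = (\<Sum>n\<in>{1..N}. indicator (Iset x n) y * (\<alpha> n (Linv a c n y) * g (Linv a c n y)))"

lemma Top_eq_Top_lin: "Top N x a c \<alpha> f b g y = f y + Top_lin N x a c \<alpha> (\<lambda>t. g t - b t) y"
  unfolding Top_def Top_lin_def by simp

locale fractal_operator = affine_partition +
  fixes \<alpha> :: "nat \<Rightarrow> real \<Rightarrow> real"
  assumes \<alpha>_measurable: "\<And>n. n \<in> {1..N} \<Longrightarrow> \<alpha> n \<in> borel_measurable (lebesgue_on {x 0..x N})"
    and esssup_\<alpha>_less_1: "esssup (lebesgue_on {x 0..x N}) (\<lambda>t. ereal (Max ((\<lambda>n. \<bar>\<alpha> n t\<bar>) ` {1..N}))) < 1"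
begin

definition "\<Lambda> = real_of_ereal (esssup M (\<lambda>t. ereal (Max ((\<lambda>n. \<bar>\<alpha> n t\<bar>) ` {1..N}))))"

abbreviation "\<Lambda>' p \<equiv> if 1 \<le> p then \<Lambda> else \<Lambda> powr real_of_ereal p"

abbreviation "A \<equiv> Top_lin N x a c \<alpha>"

lemma esssup_\<alpha>_eq: "esssup M (\<lambda>t. ereal (Max ((\<lambda>n. \<bar>\<alpha> n t\<bar>) ` {1..N}))) = ereal \<Lambda>"
  and \<Lambda>_nonneg: "0 \<le> \<Lambda>" and \<Lambda>_less_1: "\<Lambda> < 1"
proof -
  have "esssup M (\<lambda>t. ereal 0) \<le> esssup M (\<lambda>t. ereal (Max ((\<lambda>n. \<bar>\<alpha> n t\<bar>) ` {1..N})))"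
    using N_pos by (intro esssup_mono) (auto simp: Max_ge_iff)
  then have "0 \<le> esssup M (\<lambda>t. ereal (Max ((\<lambda>n. \<bar>\<alpha> n t\<bar>) ` {1..N})))"
    using esssup_const[OF emeasure_M_space_neq_0, of "ereal 0"] by (simp add: zero_ereal_def)
  moreover have "e = ereal (real_of_ereal e) \<and> 0 \<le> real_of_ereal e \<and> real_of_ereal e < 1"
    if "0 \<le> e" "e < 1" for e :: ereal
    using that by (cases e) auto
  ultimately show "esssup M (\<lambda>t. ereal (Max ((\<lambda>n. \<bar>\<alpha> n t\<bar>) ` {1..N}))) = ereal \<Lambda>" "0 \<le> \<Lambda>" "\<Lambda> < 1"
    using esssup_\<alpha>_less_1 unfolding \<Lambda>_def by blast+
qed

lemma AE_abs_\<alpha>_le: "AE t in M. \<forall>n\<in>{1..N}. \<bar>\<alpha> n t\<bar> \<le> \<Lambda>"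
proof -
  have "AE t in M. ereal (Max ((\<lambda>n. \<bar>\<alpha> n t\<bar>) ` {1..N})) \<le> ereal \<Lambda>"
    using esssup_AE[of "\<lambda>t. ereal (Max ((\<lambda>n. \<bar>\<alpha> n t\<bar>) ` {1..N}))" M] unfolding esssup_\<alpha>_eq .
  then show ?thesis
    by (rule eventually_mono) (use Max_ge[of "(\<lambda>n. \<bar>\<alpha> n _\<bar>) ` {1..N}"] in force)
qed

lemma \<Lambda>'_nonneg: "0 \<le> \<Lambda>' p"
  using \<Lambda>_nonneg by simp

lemma Top_lin_Iset: "m \<in> {1..N} \<Longrightarrow> y \<in> Iset x m \<Longrightarrow> A g y = \<alpha> m (Linv a c m y) * g (Linv a c m y)"
  unfolding Top_lin_def by (rule sum_indicator_Iset)

lemma Top_lin_measurable: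
  assumes g: "g \<in> borel_measurable M"
  shows "A g \<in> borel_measurable M"
  unfolding Top_lin_def[abs_def]
  using measurable_Iset_Linv[of _ "\<lambda>t. \<alpha> _ t * g t"] \<alpha>_measurable g
  by (intro borel_measurable_sum) simp

lemma AE_abs_Top_lin_le:
  assumes "AE t in M. \<bar>g t\<bar> \<le> G"
  shows "AE y in M. \<bar>A g y\<bar> \<le> \<Lambda> * G"
proof -
  have "AE y in M. \<forall>n\<in>{1..N}. y \<in> Iset x n \<longrightarrow>
      \<bar>\<alpha> n (Linv a c n y)\<bar> \<le> \<Lambda> \<and> \<bar>g (Linv a c n y)\<bar> \<le> G"
    using AE_abs_\<alpha>_le assms by (intro AE_M_Linv_all) (auto elim: eventually_mono)
  then show ?thesis using AE_space
  proof eventually_elim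
    case (elim y)
    then have "y \<in> I" by simp
    then obtain m where m: "m \<in> {1..N}" "y \<in> Iset x m" using Iset_cover by blast
    then have "\<bar>\<alpha> m (Linv a c m y)\<bar> \<le> \<Lambda>" "\<bar>g (Linv a c m y)\<bar> \<le> G" using elim(1) by auto
    from mult_mono[OF this \<Lambda>_nonneg abs_ge_zero] show ?case
      by (simp add: Top_lin_Iset[OF m] abs_mult)
  qed
qed

lemma AE_abs_Top_lin_ge:
  assumes \<alpha>: "\<forall>n\<in>{1..N}. \<forall>t\<in>I. \<bar>\<alpha> n t\<bar> = \<Lambda>" and H: "AE y in M. \<bar>A g y\<bar> \<le> H"
  shows "AE t in M. \<Lambda> * \<bar>g t\<bar> \<le> H"
proof -
  have one: "1 \<in> {1..N}" using N_pos by simp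
  \<comment> \<open>\<open>Iset x 1\<close> is the only closed piece, so \<open>L\<^sub>1\<close> maps all of \<open>I\<close> into it.\<close>
  from AE_M_L[OF one H] show ?thesis using AE_space
  proof eventually_elim
    case (elim t)
    then have L: "a 1 * t + c 1 \<in> Iset x 1" using L_in_Icc[OF one] by (simp add: Iset_def)
    have "A g (a 1 * t + c 1) = \<alpha> 1 t * g t"
      unfolding Top_lin_Iset[OF one L] Linv_L[OF one] ..
    then show ?case using elim \<alpha> one by (simp add: abs_mult)
  qed
qed

lemma integral_abs_powr_Top_lin:
  assumes g: "g \<in> borel_measurable M" and q: "0 < q"
  shows "integral_abs_powr q M (A g)
     = (\<Sum>n\<in>{1..N}. ennreal (a n) * (\<integral>\<^sup>+t. ennreal (\<bar>\<alpha> n t\<bar> powr q * \<bar>g t\<bar> powr q) \<partial>M))"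
proof -
  have meas: "(\<lambda>t. ennreal (\<bar>\<alpha> n t\<bar> powr q * \<bar>g t\<bar> powr q)) \<in> borel_measurable M"
    if "n \<in> {1..N}" for n
    using \<alpha>_measurable[OF that] g by measurable
  have "integral_abs_powr q M (A g) = (\<integral>\<^sup>+y. (\<Sum>n\<in>{1..N}. indicator (Iset x n) y *
      ennreal (\<bar>\<alpha> n (Linv a c n y)\<bar> powr q * \<bar>g (Linv a c n y)\<bar> powr q)) \<partial>M)"
  proof (rule nn_integral_cong)
    fix y assume "y \<in> space M"
    then have "y \<in> I" by simp
    then obtain m where m: "m \<in> {1..N}" "y \<in> Iset x m" using Iset_cover by blast
    show "ennreal (\<bar>A g y\<bar> powr q) = (\<Sum>n\<in>{1..N}. indicator (Iset x n) y *
        ennreal (\<bar>\<alpha> n (Linv a c n y)\<bar> powr q * \<bar>g (Linv a c n y)\<bar> powr q))"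
      by (subst sum_indicator_Iset[OF m]) (simp add: Top_lin_Iset[OF m] abs_mult powr_mult)
  qed
  also have "\<dots> = (\<Sum>n\<in>{1..N}. \<integral>\<^sup>+y. indicator (Iset x n) y *
      ennreal (\<bar>\<alpha> n (Linv a c n y)\<bar> powr q * \<bar>g (Linv a c n y)\<bar> powr q) \<partial>M)"
  proof (rule nn_integral_sum)
    fix n assume "n \<in> {1..N}"
    from measurable_Iset_Linv[OF this meas[OF this]]
    show "(\<lambda>y. indicator (Iset x n) y *
        ennreal (\<bar>\<alpha> n (Linv a c n y)\<bar> powr q * \<bar>g (Linv a c n y)\<bar> powr q)) \<in> borel_measurable M" .
  qed
  also have "\<dots> = (\<Sum>n\<in>{1..N}. ennreal (a n) * (\<integral>\<^sup>+t. ennreal (\<bar>\<alpha> n t\<bar> powr q * \<bar>g t\<bar> powr q) \<partial>M))"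
  proof (rule sum.cong)
    fix n assume "n \<in> {1..N}"
    from nn_integral_Iset_Linv[OF this meas[OF this]]
    show "(\<integral>\<^sup>+y. indicator (Iset x n) y *
        ennreal (\<bar>\<alpha> n (Linv a c n y)\<bar> powr q * \<bar>g (Linv a c n y)\<bar> powr q) \<partial>M)
      = ennreal (a n) * (\<integral>\<^sup>+t. ennreal (\<bar>\<alpha> n t\<bar> powr q * \<bar>g t\<bar> powr q) \<partial>M)" .
  qed simp
  finally show ?thesis .
qed

lemma integral_abs_powr_Top_lin_le:
  assumes g: "g \<in> borel_measurable M" and q: "0 < q"
  shows "integral_abs_powr q M (A g) \<le> ennreal (\<Lambda> powr q) * integral_abs_powr q M g"
proof -
  have "(\<integral>\<^sup>+t. ennreal (\<bar>\<alpha> n t\<bar> powr q * \<bar>g t\<bar> powr q) \<partial>M)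
      \<le> ennreal (\<Lambda> powr q) * integral_abs_powr q M g" if n: "n \<in> {1..N}" for n
  proof -
    have "AE t in M. ennreal (\<bar>\<alpha> n t\<bar> powr q * \<bar>g t\<bar> powr q)
        \<le> ennreal (\<Lambda> powr q) * ennreal (\<bar>g t\<bar> powr q)"
      using AE_abs_\<alpha>_le by (rule eventually_mono)
        (use n q in \<open>auto simp: ennreal_mult[symmetric] intro!: ennreal_leI mult_right_mono powr_mono2\<close>)
    from nn_integral_mono_AE[OF this] show ?thesis using g by (simp add: nn_integral_cmult)
  qed
  then have "integral_abs_powr q M (A g)
      \<le> (\<Sum>n\<in>{1..N}. ennreal (a n) * (ennreal (\<Lambda> powr q) * integral_abs_powr q M g))"
    unfolding integral_abs_powr_Top_lin[OF g q] by (intro sum_mono mult_left_mono) auto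
  then show ?thesis by (simp only: sum_a_mult)
qed

lemma integral_abs_powr_Top_lin_eq:
  assumes g: "g \<in> borel_measurable M" and q: "0 < q" and \<alpha>: "\<forall>n\<in>{1..N}. \<forall>t\<in>I. \<bar>\<alpha> n t\<bar> = \<Lambda>"
  shows "integral_abs_powr q M (A g) = ennreal (\<Lambda> powr q) * integral_abs_powr q M g"
proof -
  have "(\<integral>\<^sup>+t. ennreal (\<bar>\<alpha> n t\<bar> powr q * \<bar>g t\<bar> powr q) \<partial>M)
      = ennreal (\<Lambda> powr q) * integral_abs_powr q M g" if n: "n \<in> {1..N}" for n
  proof -
    have "(\<integral>\<^sup>+t. ennreal (\<bar>\<alpha> n t\<bar> powr q * \<bar>g t\<bar> powr q) \<partial>M)
        = (\<integral>\<^sup>+t. ennreal (\<Lambda> powr q) * ennreal (\<bar>g t\<bar> powr q) \<partial>M)"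
      using \<alpha> n by (intro nn_integral_cong) (simp add: ennreal_mult[symmetric])
    then show ?thesis using g by (simp add: nn_integral_cmult)
  qed
  then have "integral_abs_powr q M (A g)
      = (\<Sum>n\<in>{1..N}. ennreal (a n) * (ennreal (\<Lambda> powr q) * integral_abs_powr q M g))"
    unfolding integral_abs_powr_Top_lin[OF g q] by (intro sum.cong) auto
  then show ?thesis by (simp only: sum_a_mult)
qed

lemma Lp_size_Top_lin_le:
  assumes p: "0 < p" and h: "h \<in> Lp_space p M"
  shows "Lp_size p M (A h) \<le> \<Lambda>' p * Lp_size p M h"
proof (cases p)
  case PInf
  have "AE y in M. \<bar>A h y\<bar> \<le> \<Lambda> * Lp_size \<infinity> M h"
    using AE_abs_le_Lp_size[OF emeasure_M_space_neq_0] h PInf by (intro AE_abs_Top_lin_le) simp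
  then show ?thesis
    using Lp_size_infinity_le[OF emeasure_M_space_neq_0] Top_lin_measurable h PInf
    by (simp add: Lp_space_borel_measurable)
next
  case (real q)
  with p h have q: "0 < q" and hm: "h \<in> borel_measurable M" "integral_abs_powr q M h < \<infinity>"
    by (auto simp: Lp_space_ereal_iff)
  show ?thesis
    using Lp_size_ereal_le_scaled[OF q \<Lambda>_nonneg Top_lin_measurable[OF hm(1)] hm
        integral_abs_powr_Top_lin_le[OF hm(1) q]]
    by (cases "1 \<le> q") (simp_all add: real)
qed (use p in simp)

lemma Lp_size_Top_lin_eq:
  assumes p: "0 < p" and h: "h \<in> Lp_space p M" and \<alpha>: "\<forall>n\<in>{1..N}. \<forall>t\<in>I. \<bar>\<alpha> n t\<bar> = \<Lambda>"
  shows "Lp_size p M (A h) = \<Lambda>' p * Lp_size p M h"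
proof (cases p)
  case PInf
  let ?H = "Lp_size \<infinity> M (A h)"
  have hm: "h \<in> borel_measurable M" using h by (rule Lp_space_borel_measurable)
  have "AE y in M. \<bar>A h y\<bar> \<le> \<Lambda> * Lp_size \<infinity> M h"
    using AE_abs_le_Lp_size[OF emeasure_M_space_neq_0] h PInf by (intro AE_abs_Top_lin_le) simp
  then have "A h \<in> Lp_space \<infinity> M"
    using Lp_size_infinity_le(1)[OF emeasure_M_space_neq_0] Top_lin_measurable[OF hm] by blast
  then have "AE t in M. \<Lambda> * \<bar>h t\<bar> \<le> ?H"
    using AE_abs_le_Lp_size[OF emeasure_M_space_neq_0] by (intro AE_abs_Top_lin_ge[OF \<alpha>])
  have "\<Lambda> * Lp_size \<infinity> M h \<le> ?H"
  proof (cases "\<Lambda> = 0")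
    case True
    then show ?thesis using esssup_abs_eq_Lp_size(2)[OF emeasure_M_space_neq_0 \<open>A h \<in> Lp_space \<infinity> M\<close>]
      by simp
  next
    case False
    then have \<Lambda>: "0 < \<Lambda>" using \<Lambda>_nonneg by simp
    have "AE t in M. \<bar>h t\<bar> \<le> ?H / \<Lambda>"
      using \<open>AE t in M. \<Lambda> * \<bar>h t\<bar> \<le> ?H\<close> by (rule eventually_mono) (use \<Lambda> in \<open>simp add: field_simps\<close>)
    then have "Lp_size \<infinity> M h \<le> ?H / \<Lambda>"
      by (rule Lp_size_infinity_le(2)[OF emeasure_M_space_neq_0 hm])
    then show ?thesis using \<Lambda> by (simp add: field_simps)
  qed
  then show ?thesis using Lp_size_Top_lin_le[OF p h] PInf by simp
next
  case (real q)
  with p h have q: "0 < q" and hm: "h \<in> borel_measurable M"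
    by (auto simp: Lp_space_ereal_iff)
  show ?thesis
    using Lp_size_ereal_eq_scaled[OF q \<Lambda>_nonneg Top_lin_measurable[OF hm] hm
        integral_abs_powr_Top_lin_eq[OF hm q \<alpha>]]
    by (cases "1 \<le> q") (simp_all add: real)
qed (use p in simp)

section \<open>Fixed points\<close>

lemma fixpt_AE_Top_lin: "is_fixpt N x a c \<alpha> p M (\<lambda>_. 0) b g \<Longrightarrow> AE y in M. g y = A (\<lambda>t. g t - b t) y"
  unfolding is_fixpt_def Top_eq_Top_lin by (auto elim: eventually_mono)

lemma fixpt_Lp_size_Top_lin:
  assumes p: "0 < p" and b: "b \<in> Lp_space p M" and fx: "is_fixpt N x a c \<alpha> p M (\<lambda>_. 0) b g"
  shows "(\<lambda>t. g t - b t) \<in> Lp_space p M" "Lp_size p M g = Lp_size p M (A (\<lambda>t. g t - b t))"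
proof -
  have g: "g \<in> Lp_space p M" using fx by (simp add: is_fixpt_def)
  then show "(\<lambda>t. g t - b t) \<in> Lp_space p M" using Lp_space_diff[OF p _ b] by blast
  then show "Lp_size p M g = Lp_size p M (A (\<lambda>t. g t - b t))"
    using fixpt_AE_Top_lin[OF fx] g
    by (intro Lp_size_cong_AE Top_lin_measurable) (auto simp: Lp_space_borel_measurable)
qed

lemma Lp_size_fixpt_diff_infinity_le:
  assumes b: "b \<in> Lp_space \<infinity> M" and fx: "is_fixpt N x a c \<alpha> \<infinity> M (\<lambda>_. 0) b g"
  shows "Lp_size \<infinity> M (\<lambda>t. g t - b t) \<le> Lp_size \<infinity> M b / (1 - \<Lambda>)"
proof -
  let ?h = "\<lambda>t. g t - b t" and ?H = "Lp_size \<infinity> M (\<lambda>t. g t - b t)"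
  have h: "?h \<in> Lp_space \<infinity> M" using fixpt_Lp_size_Top_lin(1)[OF _ b fx] by simp
  have "AE t in M. \<bar>A ?h t\<bar> \<le> \<Lambda> * ?H"
    using AE_abs_le_Lp_size[OF emeasure_M_space_neq_0 h] by (rule AE_abs_Top_lin_le)
  then have "AE t in M. \<bar>?h t\<bar> \<le> \<Lambda> * ?H + Lp_size \<infinity> M b"
    using fixpt_AE_Top_lin[OF fx] AE_abs_le_Lp_size[OF emeasure_M_space_neq_0 b]
    by eventually_elim auto
  then have "?H \<le> \<Lambda> * ?H + Lp_size \<infinity> M b"
    using h by (intro Lp_size_infinity_le(2)[OF emeasure_M_space_neq_0])
      (auto simp: Lp_space_borel_measurable)
  then show ?thesis using \<Lambda>_less_1 by (simp add: field_simps)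
qed

text \<open>A weighted convexity bound, valid for every \<open>q > 0\<close>, takes the place of Minkowski's inequality;
  the condition \<open>\<kappa> * \<Lambda> powr q < 1\<close> lets the term coming from \<open>g = A h\<close> be absorbed.\<close>

lemma integral_abs_powr_fixpt_diff_le:
  assumes q: "0 < q" and \<kappa>K: "0 \<le> \<kappa>" "0 \<le> K" "\<kappa> * \<Lambda> powr q < 1"
    and split: "\<And>s t. 0 \<le> s \<Longrightarrow> 0 \<le> t \<Longrightarrow> (s + t) powr q \<le> \<kappa> * s powr q + K * t powr q"
    and b: "b \<in> Lp_space (ereal q) M" and fx: "is_fixpt N x a c \<alpha> (ereal q) M (\<lambda>_. 0) b g"
  shows "enn2real (integral_abs_powr q M (\<lambda>t. g t - b t))
    \<le> K * enn2real (integral_abs_powr q M b) / (1 - \<kappa> * \<Lambda> powr q)"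
proof -
  let ?h = "\<lambda>t. g t - b t"
  have g: "g \<in> Lp_space (ereal q) M" using fx by (simp add: is_fixpt_def)
  have h: "?h \<in> Lp_space (ereal q) M" using fixpt_Lp_size_Top_lin(1)[OF _ b fx] q by simp
  have meas: "b \<in> borel_measurable M" "g \<in> borel_measurable M" "?h \<in> borel_measurable M"
    and fin: "integral_abs_powr q M b < \<infinity>" "integral_abs_powr q M g < \<infinity>"
      "integral_abs_powr q M ?h < \<infinity>"
    using b g h by (auto simp: Lp_space_ereal_iff)
  define H G B where "H = enn2real (integral_abs_powr q M ?h)"
    and "G = enn2real (integral_abs_powr q M g)" and "B = enn2real (integral_abs_powr q M b)"
  have "H \<le> \<kappa> * G + K * B"
  proof -
    have "integral_abs_powr q M ?h
        \<le> ennreal \<kappa> * integral_abs_powr q M g + ennreal K * integral_abs_powr q M b"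
      by (rule integral_abs_powr_diff_le[OF meas(2,1) q \<kappa>K(1,2) split])
    from enn2real_mono[OF this] show ?thesis
      using fin \<kappa>K by (simp add: H_def G_def B_def enn2real_plus enn2real_mult ennreal_mult_less_top)
  qed
  moreover have "G \<le> \<Lambda> powr q * H"
  proof -
    have "integral_abs_powr q M g = integral_abs_powr q M (A ?h)"
      using fixpt_AE_Top_lin[OF fx] by (intro nn_integral_cong_AE) (auto elim: eventually_mono)
    also have "\<dots> \<le> ennreal (\<Lambda> powr q) * integral_abs_powr q M ?h"
      by (rule integral_abs_powr_Top_lin_le[OF meas(3) q])
    finally show ?thesis
      using enn2real_mono fin(3) by (fastforce simp: G_def H_def enn2real_mult ennreal_mult_less_top)
  qed
  ultimately have "H \<le> \<kappa> * (\<Lambda> powr q * H) + K * B"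
    using mult_left_mono[of G "\<Lambda> powr q * H" \<kappa>] \<kappa>K by linarith
  then show ?thesis using \<kappa>K(3) by (simp add: H_def B_def field_simps)
qed

lemma fixpt_diff_bounded:
  assumes p: "0 < p"
  obtains C where "\<And>b g. b \<in> Lp_space p M \<Longrightarrow> Lp_size p M b \<le> 1 \<Longrightarrow>
      is_fixpt N x a c \<alpha> p M (\<lambda>_. 0) b g \<Longrightarrow> Lp_size p M (\<lambda>t. g t - b t) \<le> C"
proof (cases p)
  case PInf
  have "Lp_size p M (\<lambda>t. g t - b t) \<le> 1 / (1 - \<Lambda>)"
    if "b \<in> Lp_space p M" "Lp_size p M b \<le> 1" "is_fixpt N x a c \<alpha> p M (\<lambda>_. 0) b g" for b g
    using Lp_size_fixpt_diff_infinity_le[of b g] divide_right_mono[of _ 1 "1 - \<Lambda>"] \<Lambda>_less_1 that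
    by (force simp: PInf)
  then show thesis by (rule that)
next
  case (real q)
  with p have q: "0 < q" by simp
  obtain \<kappa> K where \<kappa>K: "0 \<le> \<kappa>" "0 \<le> K" "\<kappa> * \<Lambda> powr q < 1"
    and split: "\<And>s t. 0 \<le> s \<Longrightarrow> 0 \<le> t \<Longrightarrow> (s + t) powr q \<le> \<kappa> * s powr q + K * t powr q"
    using powr_add_le_weighted[OF q \<Lambda>_nonneg \<Lambda>_less_1] by blast
  let ?C = "K / (1 - \<kappa> * \<Lambda> powr q)"
  have "Lp_size p M (\<lambda>t. g t - b t) \<le> (if 1 \<le> q then ?C powr (1 / q) else ?C)"
    if b: "b \<in> Lp_space p M" "Lp_size p M b \<le> 1" and fx: "is_fixpt N x a c \<alpha> p M (\<lambda>_. 0) b g" for b g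
  proof -
    have meas: "b \<in> borel_measurable M" "(\<lambda>t. g t - b t) \<in> borel_measurable M"
      using b fixpt_Lp_size_Top_lin(1)[OF p b(1) fx] by (auto simp: Lp_space_borel_measurable)
    have "enn2real (integral_abs_powr q M b) \<le> 1"
      using b(2) Lp_size_ereal_le_1_iff[OF q meas(1)] by (simp add: real)
    then have "K * enn2real (integral_abs_powr q M b) / (1 - \<kappa> * \<Lambda> powr q) \<le> ?C"
      using \<kappa>K by (intro divide_right_mono mult_left_le) auto
    then have "enn2real (integral_abs_powr q M (\<lambda>t. g t - b t)) \<le> ?C"
      using integral_abs_powr_fixpt_diff_le[OF q \<kappa>K split, of b g] b fx by (simp add: real)
    then show ?thesis
      using q by (auto simp: real Lp_size_ereal[OF meas(2)] intro: powr_mono2)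
  qed
  then show thesis by (rule that)
qed (use p in simp)

text \<open>\<open>g = A (g - b)\<close> means \<open>(I - A) g = - A b\<close>, solved by \<open>g = b - (I - A)\<inverse> b\<close>.\<close>

definition neumann_sum :: "(real \<Rightarrow> real) \<Rightarrow> real \<Rightarrow> real" where
  "neumann_sum b y = (\<Sum>k. (A ^^ k) b y)"

lemma Top_lin_power_measurable: "b \<in> borel_measurable M \<Longrightarrow> (A ^^ k) b \<in> borel_measurable M"
  by (induction k) (simp_all add: Top_lin_measurable)

lemma fixpt_neumann_sum_AE:
  assumes b: "b \<in> borel_measurable M" and sum: "AE t in M. summable (\<lambda>k. (A ^^ k) b t)"
  shows "AE y in M. Top N x a c \<alpha> (\<lambda>_. 0) b (\<lambda>t. b t - neumann_sum b t) y = b y - neumann_sum b y"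
proof -
  have "AE y in M. \<forall>n\<in>{1..N}. y \<in> Iset x n \<longrightarrow> summable (\<lambda>k. (A ^^ k) b (Linv a c n y))"
    using sum by (rule AE_M_Linv_all)
  then show ?thesis using sum AE_space
  proof eventually_elim
    case (elim y)
    then have "y \<in> I" by simp
    then obtain m where m: "m \<in> {1..N}" "y \<in> Iset x m" using Iset_cover by blast
    let ?t = "Linv a c m y"
    have sum_t: "summable (\<lambda>k. (A ^^ k) b ?t)" using elim(1) m by blast
    have "Top N x a c \<alpha> (\<lambda>_. 0) b (\<lambda>t. b t - neumann_sum b t) y = - (\<alpha> m ?t * neumann_sum b ?t)"
      by (simp add: Top_eq_Top_lin Top_lin_Iset[OF m])
    also have "\<alpha> m ?t * neumann_sum b ?t = (\<Sum>k. (A ^^ Suc k) b y)"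
      using suminf_mult[OF sum_t, of "\<alpha> m ?t"] by (simp add: neumann_sum_def Top_lin_Iset[OF m])
    also have "\<dots> = neumann_sum b y - b y"
      using suminf_split_head[OF elim(2)] by (simp add: neumann_sum_def)
    finally show ?case by simp
  qed
qed

lemma AE_abs_Top_lin_power_le:
  assumes b: "b \<in> Lp_space \<infinity> M"
  shows "AE t in M. \<forall>k. \<bar>(A ^^ k) b t\<bar> \<le> Lp_size \<infinity> M b * \<Lambda> ^ k"
proof -
  have "AE t in M. \<bar>(A ^^ k) b t\<bar> \<le> Lp_size \<infinity> M b * \<Lambda> ^ k" for k
  proof (induction k)
    case 0
    then show ?case using AE_abs_le_Lp_size[OF emeasure_M_space_neq_0 b] by simp
  next
    case (Suc k)
    then show ?case using AE_abs_Top_lin_le[OF Suc] by (simp add: algebra_simps)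
  qed
  then show ?thesis by (simp add: AE_all_countable)
qed

lemma integral_abs_powr_Top_lin_power_le:
  assumes b: "b \<in> borel_measurable M" and q: "0 < q"
  shows "integral_abs_powr q M ((A ^^ k) b) \<le> ennreal ((\<Lambda> powr q) ^ k) * integral_abs_powr q M b"
proof (induction k)
  case (Suc k)
  have "integral_abs_powr q M ((A ^^ Suc k) b) \<le> ennreal (\<Lambda> powr q) * integral_abs_powr q M ((A ^^ k) b)"
    using integral_abs_powr_Top_lin_le[OF Top_lin_power_measurable[OF b] q] by simp
  also have "\<dots> \<le> ennreal (\<Lambda> powr q) * (ennreal ((\<Lambda> powr q) ^ k) * integral_abs_powr q M b)"
    by (rule mult_left_mono[OF Suc]) simp
  finally show ?case by (simp add: ennreal_mult mult.assoc)
qed simp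

lemma neumann_sum_Lp_space:
  assumes p: "0 < p" and b: "b \<in> Lp_space p M"
  shows "AE t in M. summable (\<lambda>k. \<bar>(A ^^ k) b t\<bar>)" "neumann_sum b \<in> Lp_space p M"
proof -
  have bm: "b \<in> borel_measurable M" using b by (rule Lp_space_borel_measurable)
  have sum_meas: "neumann_sum b \<in> borel_measurable M"
    unfolding neumann_sum_def[abs_def] using Top_lin_power_measurable[OF bm]
    by (intro borel_measurable_suminf) auto
  have "(AE t in M. summable (\<lambda>k. \<bar>(A ^^ k) b t\<bar>)) \<and> neumann_sum b \<in> Lp_space p M"
  proof (cases p)
    case PInf
    let ?B = "Lp_size \<infinity> M b"
    have "AE t in M. summable (\<lambda>k. \<bar>(A ^^ k) b t\<bar>) \<and> \<bar>neumann_sum b t\<bar> \<le> ?B / (1 - \<Lambda>)"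
      using AE_abs_Top_lin_power_le[of b] b PInf
    proof (auto elim!: eventually_mono)
      fix t assume "\<forall>k. \<bar>(A ^^ k) b t\<bar> \<le> ?B * \<Lambda> ^ k"
      from abs_summable_geometric_bound[OF spec[OF this] \<Lambda>_nonneg \<Lambda>_less_1]
      show "summable (\<lambda>k. \<bar>(A ^^ k) b t\<bar>)" "\<bar>neumann_sum b t\<bar> \<le> ?B / (1 - \<Lambda>)"
        by (simp_all add: neumann_sum_def)
    qed
    then show ?thesis
      using Lp_size_infinity_le(1)[OF emeasure_M_space_neq_0 sum_meas] PInf
      by (auto elim: eventually_mono)
  next
    case (real q)
    with p have q: "0 < q" by simp
    have "\<Lambda> powr q < 1" using powr01_less_one[of \<Lambda> q] \<Lambda>_nonneg \<Lambda>_less_1 q by (cases "\<Lambda> = 0") auto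
    then have "(AE t in M. summable (\<lambda>k. \<bar>(A ^^ k) b t\<bar>)) \<and> integral_abs_powr q M (neumann_sum b) < \<infinity>"
      using AE_summable_if_geometric_decay[OF Top_lin_power_measurable[OF bm] q _ _
          integral_abs_powr_Top_lin_power_le[OF bm q]] b
      by (auto simp: real Lp_space_ereal_iff neumann_sum_def[abs_def])
    then show ?thesis using sum_meas by (simp add: real Lp_space_ereal_iff)
  qed (use p in simp)
  then show "AE t in M. summable (\<lambda>k. \<bar>(A ^^ k) b t\<bar>)" "neumann_sum b \<in> Lp_space p M" by auto
qed

lemma fixpt_neumann_sum:
  assumes p: "0 < p" and b: "b \<in> Lp_space p M"
  shows "is_fixpt N x a c \<alpha> p M (\<lambda>_. 0) b (\<lambda>t. b t - neumann_sum b t)"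
proof -
  have "AE t in M. summable (\<lambda>k. (A ^^ k) b t)"
    using neumann_sum_Lp_space(1)[OF p b] by (rule eventually_mono) (rule summable_rabs_cancel)
  then show ?thesis
    using fixpt_neumann_sum_AE[OF Lp_space_borel_measurable[OF b]]
      Lp_space_diff[OF p b neumann_sum_Lp_space(2)[OF p b]]
    by (simp add: is_fixpt_def)
qed

lemma fixpt_starT:
  assumes "0 < p" "b \<in> Lp_space p M"
  shows "is_fixpt N x a c \<alpha> p M (\<lambda>_. 0) b (starT N x a c \<alpha> p M (\<lambda>_. 0) b)"
proof -
  have "\<exists>g. is_fixpt N x a c \<alpha> p M (\<lambda>_. 0) b g" using fixpt_neumann_sum[OF assms] by blast
  then show ?thesis unfolding starT_def by (rule someI_ex)
qed

lemma op_size_starT_le: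
  assumes p: "0 < p"
  defines "P \<equiv> starT N x a c \<alpha> p M (\<lambda>_. 0)"
  shows "op_size p M P \<le> \<Lambda>' p * op_size p M (\<lambda>b t. P b t - b t)"
proof (rule op_size_le[OF \<Lambda>'_nonneg])
  have fx: "is_fixpt N x a c \<alpha> p M (\<lambda>_. 0) b (P b)" if "b \<in> Lp_space p M" for b
    unfolding P_def by (rule fixpt_starT[OF p that])
  then show "Lp_size p M (P b) \<le> \<Lambda>' p * Lp_size p M (\<lambda>t. P b t - b t)"
    if "b \<in> Lp_space p M" for b
    using fixpt_Lp_size_Top_lin[OF p that fx[OF that]] Lp_size_Top_lin_le[OF p] by simp
  obtain C where "\<And>b g. b \<in> Lp_space p M \<Longrightarrow> Lp_size p M b \<le> 1 \<Longrightarrow>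
      is_fixpt N x a c \<alpha> p M (\<lambda>_. 0) b g \<Longrightarrow> Lp_size p M (\<lambda>t. g t - b t) \<le> C"
    using fixpt_diff_bounded[OF p] by blast
  then show "bdd_above {Lp_size p M (\<lambda>t. P b t - b t) | b. b \<in> Lp_space p M \<and> Lp_size p M b \<le> 1}"
    using fx by (auto intro!: bdd_aboveI[of _ C])
qed

end

theorem proposition6p2:
  fixes N :: nat and x a c :: "nat \<Rightarrow> real" and \<alpha> :: "nat \<Rightarrow> real \<Rightarrow> real"
    and p :: ereal
  defines "M \<equiv> lebesgue_on {x 0..x N}"
  defines "\<Lambda> \<equiv> real_of_ereal (esssup M (\<lambda>t. ereal (Max ((\<lambda>n. \<bar>\<alpha> n t\<bar>) ` {1..N}))))"
  defines "\<Lambda>' \<equiv> (if 1 \<le> p then \<Lambda> else \<Lambda> powr real_of_ereal p)"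
  defines "P \<equiv> starT N x a c \<alpha> p M (\<lambda>_. 0)"
  assumes N2: "2 \<le> N"
    and part: "\<And>i. i < N \<Longrightarrow> x i < x (Suc i)"
    and L0: "\<And>n. n \<in> {1..N} \<Longrightarrow> a n * x 0 + c n = x (n - 1)"
    and LN: "\<And>n. n \<in> {1..N} \<Longrightarrow> a n * x N + c n = x n"
    and \<alpha>meas: "\<And>n. n \<in> {1..N} \<Longrightarrow> \<alpha> n \<in> borel_measurable M"
    and \<Lambda>lt1: "esssup M (\<lambda>t. ereal (Max ((\<lambda>n. \<bar>\<alpha> n t\<bar>) ` {1..N}))) < 1"
    and p0: "0 < p"
  shows "((\<forall>n\<in>{1..N}. \<forall>t\<in>{x 0..x N}. \<alpha> n t \<in> {\<Lambda>, - \<Lambda>}) \<longrightarrow>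
           (\<forall>b\<in>Lp_space p M. \<forall>g. is_fixpt N x a c \<alpha> p M (\<lambda>_. 0) b g \<longrightarrow>
              Lp_size p M g = \<Lambda>' * Lp_size p M (\<lambda>t. g t - b t)))
       \<and> ((\<forall>n\<in>{1..N}. \<exists>k. \<forall>t\<in>{x 0..x N}. \<alpha> n t = k) \<longrightarrow>
           (\<forall>b\<in>Lp_space p M. \<forall>g. is_fixpt N x a c \<alpha> p M (\<lambda>_. 0) b g \<longrightarrow>
              Lp_size p M g \<le> \<Lambda>' * Lp_size p M (\<lambda>t. g t - b t))
           \<and> op_size p M P \<le> \<Lambda>' * op_size p M (\<lambda>b t. P b t - b t))"
proof -
  interpret F: fractal_operator N x a c \<alpha>
    using N2 part L0 LN \<alpha>meas \<Lambda>lt1 by unfold_locales (auto simp: M_def)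
  have \<Lambda>: "F.\<Lambda> = \<Lambda>" unfolding F.\<Lambda>_def \<Lambda>_def M_def ..
  show ?thesis
    unfolding \<Lambda>'_def P_def M_def \<Lambda>[symmetric]
  proof (intro conjI impI ballI allI)
    fix b g
    assume \<alpha>: "\<forall>n\<in>{1..N}. \<forall>t\<in>{x 0..x N}. \<alpha> n t \<in> {F.\<Lambda>, - F.\<Lambda>}"
      and b: "b \<in> Lp_space p (lebesgue_on {x 0..x N})"
      and fx: "is_fixpt N x a c \<alpha> p (lebesgue_on {x 0..x N}) (\<lambda>_. 0) b g"
    have "\<forall>n\<in>{1..N}. \<forall>t\<in>{x 0..x N}. \<bar>\<alpha> n t\<bar> = F.\<Lambda>"
      using \<alpha> F.\<Lambda>_nonneg by fastforce
    then show "Lp_size p (lebesgue_on {x 0..x N}) g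
        = F.\<Lambda>' p * Lp_size p (lebesgue_on {x 0..x N}) (\<lambda>t. g t - b t)"
      using F.fixpt_Lp_size_Top_lin[OF p0 b fx] F.Lp_size_Top_lin_eq[OF p0] by simp
  next
    fix b g
    assume b: "b \<in> Lp_space p (lebesgue_on {x 0..x N})"
      and fx: "is_fixpt N x a c \<alpha> p (lebesgue_on {x 0..x N}) (\<lambda>_. 0) b g"
    show "Lp_size p (lebesgue_on {x 0..x N}) g
        \<le> F.\<Lambda>' p * Lp_size p (lebesgue_on {x 0..x N}) (\<lambda>t. g t - b t)"
      using F.fixpt_Lp_size_Top_lin[OF p0 b fx] F.Lp_size_Top_lin_le[OF p0] by simp
  qed (rule F.op_size_starT_le[OF p0])
qed

end
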